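(* Let $n$ be a positive integer and let $i,k\in\{1,\ldots,n\}$. Suppose that $H\sim\text{Hyp}(n,i,k)$ satisfies $\mathbb{E}(H)\in [1,\min\{i,k\}-2]$ and $\frac{(n-i)(n-k)}{n}> 1$. Then \[ \mathbb{P}(H\ge \mathbb{E}(H)) \,\ge\,\frac{e^{-1/8}}{4\sqrt{2}} \cdot \sqrt{\frac{n-1}{n}} \cdot\frac{ \sqrt{\text{Var}(H)} }{1 + \sqrt{1+ \frac{n-1}{n-k}\cdot\text{Var}(H)}}. \]
   Context: $\text{Hyp}(n,i,k)$ denotes the hypergeometric distribution: the number of black marbles in a sample without replacement of size $k$ from an urn with $i$ black and $n-i$ white marbles, i.e. $\mathbb{P}(H=j)=\binom{i}{j}\binom{n-i}{k-j}/\binom{n}{k}$ for $j\in\{\max\{0,k-(n-i)\},\ldots,\min\{k,i\}\}$. One has $\mathbb{E}(H)=ik/n$ and $\text{Var}(H)=k\cdot\frac{i}{n}\cdot\frac{n-i}{n}\cdot\frac{n-k}{n-1}$. *)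

theory Defs
  imports "HOL-Analysis.Analysis"
begin

text \<open>Hypergeometric distribution Hyp(n,i,k): probability that H = j, for j in 0..k
  (binomial coefficients vanish outside the support).\<close>
definition hyp_pmf :: "nat \<Rightarrow> nat \<Rightarrow> nat \<Rightarrow> nat \<Rightarrow> real" where
  "hyp_pmf n i k j =
     (if j \<le> k then real (i choose j) * real ((n - i) choose (k - j)) / real (n choose k) else 0)"

definition hyp_prob :: "nat \<Rightarrow> nat \<Rightarrow> nat \<Rightarrow> (nat \<Rightarrow> bool) \<Rightarrow> real" where
  "hyp_prob n i k P = (\<Sum>j\<in>{j. j \<le> k \<and> P j}. hyp_pmf n i k j)"

definition hyp_mean :: "nat \<Rightarrow> nat \<Rightarrow> nat \<Rightarrow> real" where
  "hyp_mean n i k = real i * real k / real n"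

definition hyp_var :: "nat \<Rightarrow> nat \<Rightarrow> nat \<Rightarrow> real" where
  "hyp_var n i k = real k * (real i / real n) * ((real n - real i) / real n)
                    * ((real n - real k) / (real n - 1))"

end

theory Submission
  imports Defs
begin

text \<open>
  With \<open>birth x = (i - x) (k - x) / n\<close> and \<open>death x = x (n - i - k + x) / n\<close>, the pmf \<open>p\<close>
  of \<open>H\<close> satisfies detailed balance \<open>death (j + 1) p (j + 1) = birth j p j\<close>, hence Stein's
  identity \<open>E[(H - \<mu>) f H] = E[death H (f H - f (H - 1))]\<close>. For \<open>m = \<lceil>\<mu>\<rceil>\<close> and \<open>f\<close> the
  indicator of \<open>[m, \<infinity>)\<close> it gives \<open>E[H - \<mu>; H \<ge> m] = death m p m\<close>. Beyond \<open>m\<close> the ratio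
  \<open>p (j + 1) / p j\<close> decreases, so the upper tail is log-concave and
  \<open>p m E[H - m + 1; H \<ge> m] \<le> P(H \<ge> m)\<^sup>2\<close>. As \<open>death \<mu> = (n - 1) / n Var H\<close> and
  \<open>death \<mu> \<le> death m \<le> death \<mu> + 6/5\<close>, this gives
  \<open>P(H \<ge> \<mu>)\<^sup>2 \<ge> (death \<mu>)\<^sup>2 (max p)\<^sup>2 / (death \<mu> + 6/5)\<close>.
  Finally \<open>p\<close> is unimodal with mode \<open>m - 1\<close> or \<open>m\<close>, and by Chebyshev the at most
  \<open>2 \<surd>(3 Var H) + 1\<close> integers within \<open>\<surd>(3 Var H)\<close> of \<open>\<mu>\<close> carry mass \<open>2/3\<close>, which bounds
  \<open>max p\<close> from below.
\<close>

lemma of_nat_Suc_mult_choose_Suc: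
  "real (Suc j) * real (a choose Suc j) = (real a - real j) * real (a choose j)"
proof (cases "j \<le> a")
  case True
  have "Suc j * (a choose Suc j) = (a - j) * (a choose j)"
    using binomial_absorption[of j a] binomial_absorb_comp[of a j] by simp
  then have "real (Suc j * (a choose Suc j)) = real ((a - j) * (a choose j))"
    by (simp only:)
  then show ?thesis
    using True by (simp add: of_nat_diff algebra_simps)
next
  case False
  then show ?thesis
    by (simp add: binomial_eq_0)
qed

lemma log_concave_of_decseq_ratio:
  fixes q r :: "nat \<Rightarrow> real"
  assumes q_nonneg: "\<And>u. 0 \<le> q u" and q_Suc: "\<And>u. q (Suc u) = r u * q u"
    and r_nonneg: "\<And>u. 0 \<le> r u" and r_dec: "decseq r"
  shows "q 0 * q (s + t) \<le> q s * q t"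
proof (induction s)
  case 0
  show ?case by simp
next
  case (Suc s)
  have "q 0 * q (Suc s + t) = r (s + t) * (q 0 * q (s + t))"
    using q_Suc[of "s + t"] by simp
  also have "\<dots> \<le> r (s + t) * (q s * q t)"
    using Suc.IH r_nonneg by (rule mult_left_mono)
  also have "\<dots> \<le> r s * (q s * q t)"
    using decseqD[OF r_dec, of s "s + t"] q_nonneg by (intro mult_right_mono) auto
  also have "\<dots> = q (Suc s) * q t"
    using q_Suc[of s] by simp
  finally show ?case .
qed

lemma weighted_sum_le_square_sum_of_log_concave:
  fixes q :: "nat \<Rightarrow> real"
  assumes q_nonneg: "\<And>u. 0 \<le> q u" and log_concave: "\<And>s t. q 0 * q (s + t) \<le> q s * q t"
  shows "q 0 * (\<Sum>u\<le>L. (real u + 1) * q u) \<le> (\<Sum>u\<le>L. q u)\<^sup>2"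
proof -
  have "q 0 * (\<Sum>u\<le>L. (real u + 1) * q u) = (\<Sum>u\<le>L. \<Sum>s\<le>u. q 0 * q (s + (u - s)))"
    by (simp add: sum_distrib_left algebra_simps)
  also have "\<dots> = (\<Sum>(s, t)\<in>{(s, t). s + t \<le> L}. q 0 * q (s + t))"
    by (rule sum.triangle_reindex_eq[symmetric])
  also have "\<dots> \<le> (\<Sum>(s, t)\<in>{(s, t). s + t \<le> L}. q s * q t)"
    by (rule sum_mono) (auto simp: log_concave)
  also have "\<dots> \<le> (\<Sum>(s, t)\<in>{..L} \<times> {..L}. q s * q t)"
    by (rule sum_mono2) (auto simp: q_nonneg)
  also have "\<dots> = (\<Sum>u\<le>L. q u)\<^sup>2"
    by (simp add: power2_eq_square sum_product sum.cartesian_product)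
  finally show ?thesis .
qed

lemma chebyshev_mass_le_window_max:
  fixes p :: "nat \<Rightarrow> real"
  assumes p_nonneg: "\<And>j. 0 \<le> p j" and p_le: "\<And>j. p j \<le> M"
    and sum_one: "(\<Sum>j\<le>k. p j) = 1" and a_pos: "0 < a"
  shows "1 - (\<Sum>j\<le>k. (real j - c)\<^sup>2 * p j) / a\<^sup>2 \<le> (2 * a + 1) * M"
proof -
  define W where "W = {j \<in> {..k}. \<bar>real j - c\<bar> \<le> a}"
  have W_sub: "W \<subseteq> {..k}"
    unfolding W_def by auto
  have outside: "(\<Sum>j\<in>{..k} - W. p j) \<le> (\<Sum>j\<le>k. (real j - c)\<^sup>2 * p j) / a\<^sup>2"
  proof -
    have "(\<Sum>j\<in>{..k} - W. p j) \<le> (\<Sum>j\<in>{..k} - W. (real j - c)\<^sup>2 / a\<^sup>2 * p j)"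
    proof (rule sum_mono)
      fix j assume "j \<in> {..k} - W"
      then have "a\<^sup>2 \<le> (real j - c)\<^sup>2"
        using abs_le_square_iff[of a "real j - c"] a_pos by (auto simp: W_def)
      then have "1 \<le> (real j - c)\<^sup>2 / a\<^sup>2"
        using a_pos by simp
      then show "p j \<le> (real j - c)\<^sup>2 / a\<^sup>2 * p j"
        using mult_right_mono[OF _ p_nonneg[of j]] by fastforce
    qed
    also have "\<dots> \<le> (\<Sum>j\<le>k. (real j - c)\<^sup>2 / a\<^sup>2 * p j)"
      by (rule sum_mono2) (auto simp: p_nonneg)
    finally show ?thesis
      by (simp add: sum_divide_distrib)
  qed
  have card_W: "real (card W) \<le> 2 * a + 1"
  proof (cases "W = {}")
    case False
    have fin: "finite W"
      using W_sub finite_subset by blast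
    define j0 where "j0 = Min W"
    have "W \<subseteq> {j0..j0 + nat \<lfloor>2 * a\<rfloor>}"
    proof
      fix j assume j: "j \<in> W"
      have "j0 \<in> W" "j0 \<le> j"
        using fin False j by (simp_all add: j0_def)
      then have "real (j - j0) \<le> 2 * a"
        using j by (auto simp: W_def of_nat_diff)
      then have "j - j0 \<le> nat \<lfloor>2 * a\<rfloor>"
        by (simp add: le_nat_floor)
      then show "j \<in> {j0..j0 + nat \<lfloor>2 * a\<rfloor>}"
        using \<open>j0 \<le> j\<close> by simp
    qed
    then have "card W \<le> nat \<lfloor>2 * a\<rfloor> + 1"
      using card_mono[of "{j0..j0 + nat \<lfloor>2 * a\<rfloor>}" W] by simp
    then show ?thesis
      using a_pos by linarith
  qed (use a_pos in simp)
  have "1 = (\<Sum>j\<in>{..k} - W. p j) + (\<Sum>j\<in>W. p j)"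
    using sum.subset_diff[OF W_sub, of p] sum_one by simp
  also have "(\<Sum>j\<in>W. p j) \<le> real (card W) * M"
    by (rule sum_bounded_above) (rule p_le)
  also have "\<dots> \<le> (2 * a + 1) * M"
    using card_W p_nonneg[of 0] p_le[of 0] by (intro mult_right_mono) auto
  finally show ?thesis
    using outside by linarith
qed

lemma quartic_bound:
  fixes s :: real
  assumes s: "1/2 \<le> s"
  shows "(7/2 * s + 1)\<^sup>2 * (s\<^sup>2 + 6/5) \<le> 72/5 * s\<^sup>2 * (s\<^sup>2 + 2 * s + 2)"
proof -
  have "72/5 * s\<^sup>2 * (s\<^sup>2 + 2 * s + 2) - (7/2 * s + 1)\<^sup>2 * (s\<^sup>2 + 6/5)
      = 43/20 * s ^ 4 + 109/5 * s ^ 3 + 131/10 * s\<^sup>2 - 42/5 * s - 6/5"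
    by algebra
  moreover have "s / 2 \<le> s\<^sup>2"
    using s by (simp add: power2_eq_square)
  moreover have "s / 4 \<le> s ^ 3"
  proof -
    have "1/4 \<le> s\<^sup>2"
      using s power_mono[of "1/2" s 2] by (simp add: power2_eq_square)
    then show ?thesis
      using s mult_left_mono[of "1/4" "s\<^sup>2" s] by (simp add: power2_eq_square power3_eq_cube)
  qed
  ultimately show ?thesis
    using s zero_le_power[of s 4] by linarith
qed

lemma anticoncentration_arithmetic:
  fixes v s X M P :: real
  assumes v: "1/4 \<le> v" and s: "4/5 \<le> s" "s \<le> 1" and X: "v \<le> X"
    and M: "2/3 \<le> M * (2 * sqrt (3 * v) + 1)"
    and P: "0 \<le> P" "(s * v)\<^sup>2 * M\<^sup>2 / (s * v + 6/5) \<le> P\<^sup>2"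
  shows "exp (-1/8) / (4 * sqrt 2) * sqrt s * (sqrt v / (1 + sqrt (1 + X))) \<le> P"
proof -
  define \<sigma> where "\<sigma> = sqrt v"
  define w where "w = sqrt (1 + v)"
  define t where "t = s * v"
  have \<sigma>_sq: "\<sigma>\<^sup>2 = v" and \<sigma>_ge: "1/2 \<le> \<sigma>"
    using v real_sqrt_le_mono[OF v] by (auto simp: \<sigma>_def real_sqrt_divide)
  have t: "4/5 * \<sigma>\<^sup>2 \<le> t" "t \<le> \<sigma>\<^sup>2"
    using s v by (auto simp: t_def \<sigma>_sq intro: mult_right_mono)
  have w: "\<sigma>\<^sup>2 + 2 * \<sigma> + 2 \<le> (1 + w)\<^sup>2"
  proof -
    have "\<sigma> \<le> w"
      unfolding \<sigma>_def w_def by (rule real_sqrt_le_mono) simp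
    moreover have "w\<^sup>2 = 1 + v"
      using v by (simp add: w_def)
    ultimately show ?thesis
      by (simp add: power2_eq_square algebra_simps \<sigma>_sq[symmetric])
  qed
  have w_pos: "0 < w"
    using v by (simp add: w_def)
  have window: "2 * sqrt (3 * v) + 1 \<le> 7/2 * \<sigma> + 1"
  proof -
    have "sqrt 3 \<le> sqrt ((7/4)\<^sup>2 :: real)"
      by (rule real_sqrt_le_mono) (simp add: power2_eq_square)
    then show ?thesis
      using v \<sigma>_ge mult_right_mono[of "sqrt 3" "7/4" \<sigma>] by (simp add: \<sigma>_def real_sqrt_mult mult_ac)
  qed
  have M_sq: "(2/3 / (7/2 * \<sigma> + 1))\<^sup>2 \<le> M\<^sup>2"
  proof -
    have "0 < M * (2 * sqrt (3 * v) + 1)" "0 < 2 * sqrt (3 * v) + 1"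
      using M v by (linarith, simp add: add_nonneg_pos)
    then have "0 < M"
      using zero_less_mult_pos2 by blast
    then have "2/3 \<le> M * (7/2 * \<sigma> + 1)"
      using order_trans[OF M mult_left_mono[OF window]] by simp
    moreover have "0 < 7/2 * \<sigma> + 1"
      using \<sigma>_ge by simp
    ultimately have "2/3 / (7/2 * \<sigma> + 1) \<le> M"
      by (simp add: pos_divide_le_eq algebra_simps)
    then show ?thesis
      using \<sigma>_ge by (intro power_mono) auto
  qed
  have exp_le: "exp (-1/8 :: real) \<le> 8/9"
  proof -
    have "9/8 \<le> exp (1/8 :: real)"
      using exp_ge_add_one_self[of "1/8 :: real"] by simp
    then show ?thesis
      by (simp add: exp_minus inverse_eq_divide field_simps)
  qed
  have "(exp (-1/8) / (4 * sqrt 2) * sqrt s * (sqrt v / (1 + sqrt (1 + X))))\<^sup>2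
      = (exp (-1/8))\<^sup>2 / 32 * t / (1 + sqrt (1 + X))\<^sup>2"
    using s v by (simp add: t_def power_mult_distrib power_divide real_sqrt_mult)
  also have "\<dots> \<le> 2/81 * t / (1 + w)\<^sup>2"
  proof (rule frac_le)
    show "(exp (-1/8))\<^sup>2 / 32 * t \<le> 2/81 * t"
      using exp_le power_mono[OF exp_le, of 2] t by (intro mult_right_mono) (auto simp: power2_eq_square)
    show "(1 + w)\<^sup>2 \<le> (1 + sqrt (1 + X))\<^sup>2"
      using X w_pos by (intro power_mono) (auto simp: w_def)
  qed (use t w_pos in auto)
  also have "\<dots> \<le> t\<^sup>2 * (2/3 / (7/2 * \<sigma> + 1))\<^sup>2 / (t + 6/5)"
  proof -
    have "(7/2 * \<sigma> + 1)\<^sup>2 * (t + 6/5) \<le> (7/2 * \<sigma> + 1)\<^sup>2 * (\<sigma>\<^sup>2 + 6/5)"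
      using t by (intro mult_left_mono) auto
    also have "\<dots> \<le> 72/5 * \<sigma>\<^sup>2 * (\<sigma>\<^sup>2 + 2 * \<sigma> + 2)"
      using \<sigma>_ge by (rule quartic_bound)
    also have "\<dots> \<le> 18 * t * (1 + w)\<^sup>2"
      by (rule mult_mono) (use t w \<sigma>_ge in auto)
    finally have quartic: "(7/2 * \<sigma> + 1)\<^sup>2 * (t + 6/5) \<le> 18 * t * (1 + w)\<^sup>2" .
    have rescale: "2/81 * t / B \<le> t\<^sup>2 * (2/3 / A)\<^sup>2 / C"
      if "A\<^sup>2 * C \<le> 18 * t * B" "0 < A" "0 < B" "0 < C" for A B C
    proof -
      have "2/81 * t * (A\<^sup>2 * C) \<le> 2/81 * t * (18 * t * B)"
        using that(1) t \<sigma>_ge by (intro mult_left_mono) auto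
      then show ?thesis
        using that by (simp add: divide_le_eq le_divide_eq power_divide power2_eq_square mult_ac)
    qed
    show ?thesis
      by (rule rescale) (use quartic t \<sigma>_ge w_pos in auto)
  qed
  also have "\<dots> \<le> t\<^sup>2 * M\<^sup>2 / (t + 6/5)"
    using M_sq t \<sigma>_ge by (intro divide_right_mono mult_left_mono) auto
  also have "\<dots> \<le> P\<^sup>2"
    using P by (simp add: t_def)
  finally show ?thesis
    using P(1) by (rule power2_le_imp_le)
qed

locale hypergeometric =
  fixes n i k :: nat
  assumes n_pos: "0 < n" and i_le_n: "i \<le> n" and k_le_n: "k \<le> n"
begin

abbreviation p :: "nat \<Rightarrow> real" where "p \<equiv> hyp_pmf n i k"
abbreviation \<mu> :: real where "\<mu> \<equiv> hyp_mean n i k"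
abbreviation V :: real where "V \<equiv> (\<Sum>j\<le>k. (real j - \<mu>)\<^sup>2 * p j)"

definition birth :: "real \<Rightarrow> real" where
  "birth x = (real i - x) * (real k - x) / real n"

definition death :: "real \<Rightarrow> real" where
  "death x = x * (real n - real i - real k + x) / real n"

lemma pmf_nonneg: "0 \<le> p j"
  by (simp add: hyp_pmf_def)

lemma pmf_eq_0_if_gt_k: "k < j \<Longrightarrow> p j = 0"
  by (simp add: hyp_pmf_def)

lemma pmf_eq_0_if_gt_i: "i < j \<Longrightarrow> p j = 0"
  by (simp add: hyp_pmf_def)

lemma pmf_eq_0_if_gt_complement:
  assumes "real n - real i < real k - real j"
  shows "p j = 0"
proof -
  have "n - i < k - j"
    using assms i_le_n by linarith
  then show ?thesis
    by (simp add: hyp_pmf_def)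
qed

lemma sum_pmf: "(\<Sum>j\<le>k. p j) = 1"
proof -
  have "(\<Sum>j\<le>k. (i choose j) * ((n - i) choose (k - j))) = n choose k"
    using vandermonde[of i "n - i" k] i_le_n by simp
  then have "(\<Sum>j\<le>k. real (i choose j) * real ((n - i) choose (k - j))) = real (n choose k)"
    by (metis (mono_tags, lifting) of_nat_mult of_nat_sum sum.cong)
  then show ?thesis
    using k_le_n by (simp add: hyp_pmf_def flip: sum_divide_distrib)
qed

lemma detailed_balance: "death (real j + 1) * p (Suc j) = birth (real j) * p j"
proof (cases "j < k")
  case True
  define b where "b = k - Suc j"
  have k_minus_j: "k - j = Suc b" "real k - real j = real (Suc b)"
    using True by (simp_all add: b_def of_nat_diff)
  have complement: "real n - real i - real k + (real j + 1) = real (n - i) - real b"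
    using True i_le_n by (simp add: b_def of_nat_diff)
  have "death (real j + 1) * p (Suc j)
      = (real (Suc j) * real (i choose Suc j)) * ((real (n - i) - real b) * real ((n - i) choose b))
        / (real n * real (n choose k))"
    using True unfolding death_def hyp_pmf_def complement b_def by simp
  also have "\<dots> = ((real i - real j) * real (i choose j)) * (real (Suc b) * real ((n - i) choose Suc b))
        / (real n * real (n choose k))"
    by (simp only: of_nat_Suc_mult_choose_Suc)
  also have "\<dots> = birth (real j) * p j"
    using True unfolding birth_def hyp_pmf_def k_minus_j(2) k_minus_j(1)[symmetric] by simp
  finally show ?thesis .
next
  case False
  then show ?thesis
    by (cases "j = k") (auto simp: hyp_pmf_def birth_def)
qed

lemma death_minus_birth: "death x - birth x = x - \<mu>"
  using n_pos by (simp add: death_def birth_def hyp_mean_def field_simps)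

lemma stein_identity:
  "(\<Sum>j\<le>k. (real j - \<mu>) * f j * p j) = (\<Sum>j\<le>k. death (real j) * (f j - f (j - 1)) * p j)"
proof -
  have "(\<Sum>j\<le>k. birth (real j) * f j * p j) = (\<Sum>j<k. birth (real j) * f j * p j)"
    by (simp add: lessThan_Suc_atMost[symmetric] birth_def)
  also have "\<dots> = (\<Sum>j<k. death (real j + 1) * f j * p (Suc j))"
    by (rule sum.cong[OF refl]) (metis detailed_balance mult.commute mult.assoc)
  also have "\<dots> = (\<Sum>j\<le>k. death (real j) * f (j - 1) * p j)"
    unfolding lessThan_Suc_atMost[symmetric] sum.lessThan_Suc_shift by (simp add: death_def add.commute)
  finally have "(\<Sum>j\<le>k. birth (real j) * f j * p j) = (\<Sum>j\<le>k. death (real j) * f (j - 1) * p j)" .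
  moreover have "(real j - \<mu>) * f j * p j = death (real j) * f j * p j - birth (real j) * f j * p j" for j
    by (simp only: death_minus_birth[symmetric] left_diff_distrib)
  ultimately show ?thesis
    by (simp add: sum_subtractf right_diff_distrib left_diff_distrib)
qed

lemma sum_centered_pmf: "(\<Sum>j\<le>k. (real j - \<mu>) * p j) = 0"
  using stein_identity[of "\<lambda>_. 1"] by simp

lemma variance_eq_expected_death: "V = (\<Sum>j\<le>k. death (real j) * p j)"
proof -
  have "V = (\<Sum>j\<le>k. (real j - \<mu>) * real j * p j - \<mu> * ((real j - \<mu>) * p j))"
    by (rule sum.cong) (simp_all add: power2_eq_square algebra_simps)
  also have "\<dots> = (\<Sum>j\<le>k. (real j - \<mu>) * real j * p j) - \<mu> * (\<Sum>j\<le>k. (real j - \<mu>) * p j)"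
    by (simp add: sum_subtractf sum_distrib_left)
  also have "\<dots> = (\<Sum>j\<le>k. death (real j) * (real j - real (j - 1)) * p j)"
    by (simp add: sum_centered_pmf stein_identity)
  also have "\<dots> = (\<Sum>j\<le>k. death (real j) * p j)"
    by (rule sum.cong) (auto simp: death_def of_nat_diff)
  finally show ?thesis .
qed

lemma variance_death_mean: "(real n - 1) * V = real n * death \<mu>"
proof -
  define c where "c = (real n - real i - real k + 2 * \<mu>) / real n"
  have taylor: "death x = death \<mu> + c * (x - \<mu>) + (x - \<mu>)\<^sup>2 / real n" for x
    using n_pos by (simp add: death_def c_def field_simps power2_eq_square)
  have "V = (\<Sum>j\<le>k. death \<mu> * p j + c * ((real j - \<mu>) * p j) + (real j - \<mu>)\<^sup>2 * p j / real n)"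
    unfolding variance_eq_expected_death
    by (rule sum.cong) (simp_all add: taylor[of "real _"] algebra_simps)
  also have "\<dots> = death \<mu> + V / real n"
    by (simp add: sum.distrib sum_pmf sum_centered_pmf flip: sum_distrib_left sum_divide_distrib)
  finally show ?thesis
    using n_pos by (simp add: field_simps)
qed

lemma death_mean_eq_variance: "death \<mu> = (real n - 1) / real n * V"
  using variance_death_mean n_pos by (simp add: field_simps)

lemma death_mean: "death \<mu> = real i * real k * (real n - real i) * (real n - real k) / real n ^ 3"
  using n_pos by (simp add: death_def hyp_mean_def field_simps power3_eq_cube)

lemma variance_eq_hyp_var:
  assumes "1 < n"
  shows "V = hyp_var n i k"
proof -
  have "V = real n * death \<mu> / (real n - 1)"
    using variance_death_mean assms by (simp add: eq_divide_eq mult.commute)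
  also have "\<dots> = hyp_var n i k"
    using assms by (simp add: death_mean hyp_var_def field_simps power3_eq_cube)
  finally show ?thesis .
qed

lemma stein_tail:
  assumes "1 \<le> m"
  shows "(\<Sum>j\<in>{m..k}. (real j - \<mu>) * p j) = death (real m) * p m"
proof -
  define f where "f j = (if m \<le> j then 1 else 0 :: real)" for j
  have "{m..k} = {j \<in> {..k}. m \<le> j}"
    by auto
  then have "(\<Sum>j\<in>{m..k}. (real j - \<mu>) * p j) = (\<Sum>j\<le>k. if m \<le> j then (real j - \<mu>) * p j else 0)"
    by (simp only: sum.inter_filter finite_atMost)
  also have "\<dots> = (\<Sum>j\<le>k. (real j - \<mu>) * f j * p j)"
    by (rule sum.cong) (simp_all add: f_def)
  also have "\<dots> = (\<Sum>j\<le>k. if j = m then death (real j) * p j else 0)"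
    unfolding stein_identity using assms by (intro sum.cong) (auto simp: f_def)
  also have "\<dots> = death (real m) * p m"
    by (simp add: pmf_eq_0_if_gt_k)
  finally show ?thesis .
qed

end

locale hypergeometric_nondegenerate = hypergeometric +
  assumes mean_ge_1: "1 \<le> \<mu>" and mean_le: "\<mu> \<le> real (min i k) - 2"
    and complement_mean_gt_1: "(real n - real i) * (real n - real k) / real n > 1"
begin

lemma mean_le_i: "\<mu> \<le> real i - 2" and mean_le_k: "\<mu> \<le> real k - 2"
  using mean_le by linarith+

lemma cross_products_ge:
  "real n \<le> real i * real k" "2 * real n \<le> real i * (real n - real k)"
  "2 * real n \<le> real k * (real n - real i)" "real n < (real n - real i) * (real n - real k)"
  using mean_ge_1 mean_le_i mean_le_k complement_mean_gt_1 n_pos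
  by (simp_all add: hyp_mean_def field_simps)

lemma size_bounds: "3 \<le> i" "3 \<le> k" "2 \<le> real n - real i" "2 \<le> real n - real k" "5 \<le> n"
proof -
  show "3 \<le> i" "3 \<le> k"
    using mean_ge_1 mean_le_i mean_le_k by linarith+
  have "2 * real n \<le> real n * (real n - real i)"
    using cross_products_ge(3) k_le_n i_le_n by (smt (verit) mult_right_mono of_nat_mono)
  then show ni: "2 \<le> real n - real i"
    using n_pos by simp
  have "2 * real n \<le> real n * (real n - real k)"
    using cross_products_ge(2) i_le_n k_le_n by (smt (verit) mult_right_mono of_nat_mono)
  then show "2 \<le> real n - real k"
    using n_pos by simp
  show "5 \<le> n"
    using ni \<open>3 \<le> i\<close> by linarith
qed

lemma one_less_n: "1 < n"
  using size_bounds(5) by simp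

lemma complement_plus_mean_gt_1: "1 < real n - real i - real k + \<mu>"
proof -
  have "real n - real i - real k + \<mu> = (real n - real i) * (real n - real k) / real n"
    using n_pos by (simp add: hyp_mean_def field_simps)
  then show ?thesis
    using complement_mean_gt_1 by simp
qed

lemma variance_ge_quarter: "1/4 \<le> V"
proof -
  define a where "a = real i * real k"
  define b where "b = (real n - real i) * (real n - real k)"
  define c where "c = real i * (real n - real k)"
  define d where "d = real k * (real n - real i)"
  have ge_n: "real n \<le> a" "real n \<le> b" "real n \<le> c" "real n \<le> d"
    using cross_products_ge n_pos by (simp_all add: a_def b_def c_def d_def)
  \<comment> \<open>One of the four products is at least \<open>n\<^sup>2/4\<close>; its partner in \<open>a b = c d\<close> is at least \<open>n\<close>.\<close>
  have "a + b + c + d = (real n)\<^sup>2" and "a * b = c * d"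
    by (simp_all add: a_def b_def c_def d_def power2_eq_square algebra_simps)
  then consider "(real n)\<^sup>2 / 4 \<le> a" | "(real n)\<^sup>2 / 4 \<le> b" | "(real n)\<^sup>2 / 4 \<le> c \<or> (real n)\<^sup>2 / 4 \<le> d"
    by linarith
  then have "(real n)\<^sup>2 / 4 * real n \<le> a * b"
  proof cases
    case 1
    then show ?thesis
      using ge_n n_pos by (intro mult_mono) auto
  next
    case 2
    then show ?thesis
      using ge_n n_pos mult_mono[of "(real n)\<^sup>2 / 4" b "real n" a] by (simp add: mult.commute)
  next
    case 3
    then show ?thesis
      using ge_n n_pos \<open>a * b = c * d\<close> mult_mono[of "(real n)\<^sup>2 / 4" c "real n" d]
        mult_mono[of "(real n)\<^sup>2 / 4" d "real n" c] by (auto simp: mult.commute)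
  qed
  moreover have "V * ((real n)\<^sup>2 * (real n - 1)) = a * b"
    using size_bounds(5) unfolding variance_eq_hyp_var[OF one_less_n] hyp_var_def a_def b_def
    by (simp add: field_simps power2_eq_square)
  moreover have "1/4 * ((real n)\<^sup>2 * (real n - 1)) \<le> (real n)\<^sup>2 / 4 * real n"
    by (simp add: algebra_simps)
  ultimately have "1/4 * ((real n)\<^sup>2 * (real n - 1)) \<le> V * ((real n)\<^sup>2 * (real n - 1))"
    by linarith
  moreover have "0 < (real n)\<^sup>2 * (real n - 1)"
    using one_less_n by simp
  ultimately show ?thesis
    by (rule mult_right_le_imp_le)
qed

definition m :: nat where "m = nat \<lceil>\<mu>\<rceil>"

lemma mean_le_m: "\<mu> \<le> real m" and m_lt_mean_plus_1: "real m < \<mu> + 1"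
proof -
  have "real m = of_int \<lceil>\<mu>\<rceil>"
    using mean_ge_1 by (simp add: m_def)
  then show "\<mu> \<le> real m" "real m < \<mu> + 1"
    by linarith+
qed

lemma one_le_m: "1 \<le> m" and m_plus_2_le_min: "m + 2 \<le> min i k"
  using mean_ge_1 mean_le_m m_lt_mean_plus_1 mean_le_i mean_le_k by linarith+

lemma mean_le_iff_m_le: "\<mu> \<le> real j \<longleftrightarrow> m \<le> j"
  unfolding m_def by (simp add: ceiling_le_iff nat_le_iff)

lemma hyp_prob_upper_tail: "hyp_prob n i k (\<lambda>j. \<mu> \<le> real j) = (\<Sum>j\<in>{m..k}. p j)"
proof -
  have "{j. j \<le> k \<and> \<mu> \<le> real j} = {m..k}"
    by (auto simp: mean_le_iff_m_le)
  then show ?thesis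
    by (simp add: hyp_prob_def)
qed

lemma death_pos: "\<mu> \<le> x \<Longrightarrow> 0 < death x"
  using complement_plus_mean_gt_1 mean_ge_1 n_pos by (simp add: death_def)

lemma death_mono: "\<mu> \<le> x \<Longrightarrow> x \<le> y \<Longrightarrow> death x \<le> death y"
  using complement_plus_mean_gt_1 mean_ge_1 n_pos
  by (auto simp: death_def intro!: divide_right_mono mult_mono)

lemma birth_antimono: "x \<le> y \<Longrightarrow> y \<le> real (min i k) \<Longrightarrow> birth y \<le> birth x"
  using n_pos by (auto simp: birth_def intro!: divide_right_mono mult_mono)

lemma birth_mean: "birth \<mu> = death \<mu>"
  using death_minus_birth[of \<mu>] by simp

definition ratio :: "nat \<Rightarrow> real" where
  "ratio j = (if j < min i k then birth (real j) / death (real j + 1) else 0)"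

lemma pmf_Suc_eq_ratio: "m \<le> j \<Longrightarrow> p (Suc j) = ratio j * p j"
proof (cases "j < min i k")
  case True
  assume "m \<le> j"
  then have "0 < death (real j + 1)"
    using mean_le_m by (intro death_pos) simp
  then show ?thesis
    using True detailed_balance[of j] by (simp add: ratio_def field_simps)
next
  case False
  then show ?thesis
    by (auto simp: ratio_def pmf_eq_0_if_gt_i pmf_eq_0_if_gt_k)
qed

lemma ratio_nonneg: "m \<le> j \<Longrightarrow> 0 \<le> ratio j"
  using mean_le_m n_pos death_pos[of "real j + 1"]
  by (auto simp: ratio_def birth_def intro!: divide_nonneg_pos)

lemma ratio_antimono:
  assumes "m \<le> j" "j \<le> j'"
  shows "ratio j' \<le> ratio j"
proof (cases "j' < min i k")
  case True
  have "birth (real j') / death (real j' + 1) \<le> birth (real j) / death (real j + 1)"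
  proof (rule frac_le)
    show "0 \<le> birth (real j)"
      using True assms n_pos by (simp add: birth_def)
    show "birth (real j') \<le> birth (real j)"
      using True assms by (intro birth_antimono) auto
    show "0 < death (real j + 1)" "death (real j + 1) \<le> death (real j' + 1)"
      using assms mean_le_m by (auto intro: death_pos death_mono)
  qed
  then show ?thesis
    using True assms by (simp add: ratio_def)
next
  case False
  then have "ratio j' = 0"
    by (auto simp: ratio_def)
  then show ?thesis
    using ratio_nonneg[of j] assms by simp
qed

lemma ratio_le_1: "m \<le> j \<Longrightarrow> ratio j \<le> 1"
proof -
  have "birth (real m) \<le> death (real m + 1)"
  proof -
    have "birth (real m) \<le> birth \<mu>"
      using mean_le_m m_plus_2_le_min by (intro birth_antimono) auto
    also have "\<dots> \<le> death (real m + 1)"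
      unfolding birth_mean using mean_le_m by (intro death_mono) auto
    finally show ?thesis .
  qed
  then have "ratio m \<le> 1"
    using m_plus_2_le_min death_pos[of "real m + 1"] mean_le_m by (simp add: ratio_def)
  then show "m \<le> j \<Longrightarrow> ratio j \<le> 1"
    using ratio_antimono[of m j] by simp
qed

lemma pmf_le_pmf_m: "m \<le> j \<Longrightarrow> p j \<le> p m"
proof (induction j rule: dec_induct)
  case (step j)
  have "p (Suc j) = ratio j * p j"
    using step.hyps(1) by (rule pmf_Suc_eq_ratio)
  also have "\<dots> \<le> p j"
    using ratio_le_1[of j] ratio_nonneg[of j] pmf_nonneg[of j] step.hyps(1)
    by (simp add: mult_left_le_one_le)
  finally show ?case
    using step.IH by simp
qed simp

lemma pmf_mono_below_m:
  assumes "j + 2 \<le> m"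
  shows "p j \<le> p (Suc j)"
proof (cases "p j = 0")
  case False
  then have "real k - real j \<le> real n - real i"
    using pmf_eq_0_if_gt_complement[of j] by linarith
  then have death_pos: "0 < death (real j + 1)"
    using n_pos by (simp add: death_def)
  have "birth (real j) - death (real j + 1) = (\<mu> - real j - 1) + (real i + real k - 2 * real j - 1) / real n"
    using n_pos by (simp add: birth_def death_def hyp_mean_def field_simps)
  moreover have "real j + 1 < \<mu>" "0 < real i + real k - 2 * real j - 1"
    using assms m_lt_mean_plus_1 m_plus_2_le_min by linarith+
  ultimately have "death (real j + 1) \<le> birth (real j)"
    using n_pos by (smt (verit) divide_pos_pos of_nat_0_less_iff)
  then have "death (real j + 1) * p j \<le> death (real j + 1) * p (Suc j)"
    using detailed_balance[of j] pmf_nonneg[of j] by (simp add: mult_right_mono)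
  then show ?thesis
    using death_pos by simp
qed (simp add: pmf_nonneg)

lemma pmf_le_pmf_m_minus_1: "j \<le> m - 1 \<Longrightarrow> p j \<le> p (m - 1)"
proof (induction j rule: inc_induct)
  case (step j)
  have "p j \<le> p (Suc j)"
    using step.hyps by (intro pmf_mono_below_m) linarith
  then show ?case
    using step.IH by linarith
qed simp

lemma pmf_le_max: "p j \<le> max (p (m - 1)) (p m)"
proof (cases "m \<le> j")
  case False
  then have "j \<le> m - 1"
    by linarith
  then show ?thesis
    using pmf_le_pmf_m_minus_1 by fastforce
qed (use pmf_le_pmf_m in fastforce)

lemma death_m_le_tail_moment: "death (real m) * p m \<le> (\<Sum>j\<in>{m..k}. (real j - real m + 1) * p j)"
proof -
  have "death (real m) * p m = (\<Sum>j\<in>{m..k}. (real j - \<mu>) * p j)"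
    using one_le_m by (rule stein_tail[symmetric])
  also have "\<dots> \<le> (\<Sum>j\<in>{m..k}. (real j - real m + 1) * p j)"
    using m_lt_mean_plus_1 by (intro sum_mono mult_right_mono) (auto simp: pmf_nonneg)
  finally show ?thesis .
qed

lemma tail_moment_le_tail_sq: "p m * (\<Sum>j\<in>{m..k}. (real j - real m + 1) * p j) \<le> (\<Sum>j\<in>{m..k}. p j)\<^sup>2"
proof -
  have shift: "(\<Sum>j\<in>{m..k}. g j) = (\<Sum>u\<le>k - m. g (m + u))" for g :: "nat \<Rightarrow> real"
    using sum.atLeastAtMost_shift_0[of m k g] m_plus_2_le_min by (simp add: atMost_atLeast0 comp_def)
  have "p m * p (m + (s + t)) \<le> p (m + s) * p (m + t)" for s t
    using log_concave_of_decseq_ratio[of "\<lambda>u. p (m + u)" "\<lambda>u. ratio (m + u)" s t]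
    by (simp add: pmf_nonneg pmf_Suc_eq_ratio ratio_nonneg ratio_antimono decseq_def)
  then have "p m * (\<Sum>u\<le>k - m. (real u + 1) * p (m + u)) \<le> (\<Sum>u\<le>k - m. p (m + u))\<^sup>2"
    using weighted_sum_le_square_sum_of_log_concave[of "\<lambda>u. p (m + u)"] by (simp add: pmf_nonneg)
  then show ?thesis
    unfolding shift by simp
qed

lemma death_mean_le_death_m: "death \<mu> \<le> death (real m)"
  using mean_le_m by (intro death_mono) auto

lemma death_m_le: "death (real m) \<le> death \<mu> + 6/5"
proof -
  have "2 * \<mu> \<le> real i + real k"
  proof -
    have "real i * real k \<le> real n * real k" "real i * real k \<le> real i * real n"
      using i_le_n k_le_n by (simp_all add: mult_right_mono mult_left_mono)
    then show ?thesis
      using n_pos by (simp add: hyp_mean_def field_simps)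
  qed
  then have "(real n - real i - real k + 2 * \<mu> + 1) / real n \<le> 6/5"
    using size_bounds(5) by (simp add: field_simps)
  moreover have "death (\<mu> + 1) = death \<mu> + (real n - real i - real k + 2 * \<mu> + 1) / real n"
    using n_pos by (simp add: death_def field_simps)
  moreover have "death (real m) \<le> death (\<mu> + 1)"
    using mean_le_m m_lt_mean_plus_1 by (intro death_mono) auto
  ultimately show ?thesis
    by linarith
qed

lemma death_mean_le_birth_m_minus_1: "death \<mu> \<le> birth (real m - 1)"
  unfolding birth_mean[symmetric] using m_lt_mean_plus_1 mean_le_i mean_le_k
  by (intro birth_antimono) auto

lemma tail_sq_ge:
  "(death \<mu>)\<^sup>2 * (max (p (m - 1)) (p m))\<^sup>2 / (death \<mu> + 6/5) \<le> (\<Sum>j\<in>{m..k}. p j)\<^sup>2"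
  (is "?lhs \<le> ?P\<^sup>2")
proof -
  have tail: "p m * (death (real m) * p m) \<le> ?P\<^sup>2"
    using death_m_le_tail_moment tail_moment_le_tail_sq pmf_nonneg[of m]
    by (meson mult_left_mono order_trans)
  have death_pos: "0 < death \<mu>"
    using death_pos by simp
  show ?thesis
  proof (cases "p (m - 1) \<le> p m")
    case True
    have "?lhs \<le> death \<mu> * (p m)\<^sup>2"
      using True death_pos pmf_nonneg[of "m - 1"]
      by (simp add: max_def field_simps power2_eq_square mult_right_mono)
    also have "\<dots> \<le> p m * (death (real m) * p m)"
      using mult_right_mono[OF death_mean_le_death_m, of "(p m)\<^sup>2"]
      by (simp add: power2_eq_square mult_ac)
    finally show ?thesis
      using tail by simp
  next
    case False
    have balance: "death (real m) * p m = birth (real m - 1) * p (m - 1)"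
      using detailed_balance[of "m - 1"] one_le_m by (simp add: of_nat_diff)
    have "?lhs \<le> (birth (real m - 1) * p (m - 1))\<^sup>2 / (death \<mu> + 6/5)"
      using False death_pos death_mean_le_birth_m_minus_1 pmf_nonneg[of "m - 1"]
      by (auto simp: max_def power_mult_distrib[symmetric] intro!: divide_right_mono power_mono mult_right_mono)
    also have "\<dots> \<le> (death (real m) * p m)\<^sup>2 / death (real m)"
      unfolding balance using death_m_le death_mean_le_death_m death_pos
      by (intro divide_left_mono) auto
    also have "\<dots> = p m * (death (real m) * p m)"
      using death_mean_le_death_m death_pos by (simp add: power2_eq_square)
    finally show ?thesis
      using tail by simp
  qed
qed

lemma mode_mass_ge: "2/3 \<le> max (p (m - 1)) (p m) * (2 * sqrt (3 * V) + 1)"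
proof -
  have "0 < V"
    using variance_ge_quarter by simp
  then have "1 - V / (sqrt (3 * V))\<^sup>2 \<le> (2 * sqrt (3 * V) + 1) * max (p (m - 1)) (p m)"
    using pmf_nonneg pmf_le_max sum_pmf by (intro chebyshev_mass_le_window_max) auto
  then show ?thesis
    using \<open>0 < V\<close> by (simp add: mult.commute)
qed

end

theorem theorem2:
  fixes n i k :: nat
  assumes "n \<ge> 1" and "1 \<le> i" and "i \<le> n" and "1 \<le> k" and "k \<le> n"
    and "1 \<le> hyp_mean n i k"
    and "hyp_mean n i k \<le> real (min i k) - 2"
    and "(real n - real i) * (real n - real k) / real n > 1"
  shows "hyp_prob n i k (\<lambda>j. real j \<ge> hyp_mean n i k)
     \<ge> exp (-1/8) / (4 * sqrt 2) * sqrt ((real n - 1) / real n)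
        * (sqrt (hyp_var n i k)
           / (1 + sqrt (1 + (real n - 1) / (real n - real k) * hyp_var n i k)))"
proof -
  interpret hypergeometric_nondegenerate n i k
    using assms by unfold_locales auto
  have "1 \<le> (real n - 1) / (real n - real k)"
    using size_bounds by (simp add: field_simps)
  then have "1 * V \<le> (real n - 1) / (real n - real k) * V"
    using variance_ge_quarter by (intro mult_right_mono) auto
  then show ?thesis
    unfolding hyp_prob_upper_tail variance_eq_hyp_var[OF one_less_n, symmetric]
    using variance_ge_quarter size_bounds(5) mode_mass_ge tail_sq_ge
    by (intro anticoncentration_arithmetic)
      (simp_all add: field_simps sum_nonneg pmf_nonneg death_mean_eq_variance)
qed

end
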